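(* Let $m,n\in\mathbb{N}$ with $n\ge m$. With the exponential-minimum decoder $\Gamma$, cost $d$, and test statistic $\phi$ with block size $k=m$ defined in the context, let $\xi,\xi'$ be i.i.d. uniform on $\Xi^n$, let $Y = \mathtt{generate}(\xi;m,p,\Gamma)$ and $\widetilde{Y}=Y$. Then almost surely $$\mathbb{P}(\phi(\widetilde{Y},\xi')\le\phi(\widetilde{Y},\xi)\mid\widetilde{Y}) \le 2n\exp\!\big(-\min\{m\,\alpha(\widetilde{Y})^2/8,\ m\,\alpha(\widetilde{Y})/4\}\big).$$
   Context: Vocabulary $[N]$; $\Xi=[0,1]^N$; uniform on $\Xi^n$ means all $nN$ coordinates i.i.d. $\mathrm{Unif}([0,1])$. A language model $p$ gives next-token distributions $p(\cdot\mid x)$; $y_{:i-1}=(y_1,\dots,y_{i-1})$. Decoder: $\Gamma(\xi,\mu):=\operatorname{argmin}_{i\in[N]}-\log(\xi_i)/\mu(i)$. $\mathtt{generate}(\xi;m,p,\Gamma)$ outputs $y\in[N]^m$ with $y_i=\Gamma(\xi_i,p(\cdot\mid y_{:i-1}))$. Cost: $d(y,\xi):=-\sum_{i=1}^{|y|}\log\xi_{i,y_i}$. Test statistic with block size $k$: $\phi(y,\xi):=\min_{1\le i\le|y|-k+1,\ 1\le j\le n} d((y_i,\dots,y_{i+k-1}),(\xi_j,\dots,\xi_{j+k-1}))$, key indices cyclic modulo $n$. Watermark potential $\alpha(y):=1-\frac{1}{|y|}\sum_i p(y_i\mid y_{:i-1})$. *)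

theory Defs
  imports "HOL-Probability.Probability"
begin

text \<open>Conventions (0-indexed): the vocabulary [N] is {0..<N}; a key xi in Xi^n is a function
  xi :: nat \<times> nat \<Rightarrow> real, xi (j, t) being coordinate t of the j-th key vector (j < n, t < N).
  A language model is p :: nat list \<Rightarrow> nat pmf, with p ys the next-token distribution
  p(. | ys).\<close>

definition gumbel_score :: "real \<Rightarrow> real \<Rightarrow> ereal" where
  "gumbel_score u w = (if w \<le> 0 \<or> u \<le> 0 then \<infinity> else ereal (- ln u / w))"

text \<open>Exponential-minimum decoder Gamma(xi, mu) = argmin_{i in [N]} -log(xi_i)/mu(i)
  (ties, a null event, broken towards the smallest index).\<close>
definition decoder :: "nat \<Rightarrow> (nat \<Rightarrow> real) \<Rightarrow> (nat \<Rightarrow> real) \<Rightarrow> nat" where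
  "decoder N xi mu = (LEAST i. i < N \<and>
      (\<forall>j<N. gumbel_score (xi i) (mu i) \<le> gumbel_score (xi j) (mu j)))"

fun generate :: "nat \<Rightarrow> (nat list \<Rightarrow> nat pmf) \<Rightarrow> (nat \<times> nat \<Rightarrow> real) \<Rightarrow> nat \<Rightarrow> nat list" where
  "generate N p xi 0 = []"
| "generate N p xi (Suc i) =
     (let ys = generate N p xi i in ys @ [decoder N (\<lambda>t. xi (i, t)) (pmf (p ys))])"

definition cost_d :: "nat list \<Rightarrow> (nat \<times> nat \<Rightarrow> real) \<Rightarrow> real" where
  "cost_d y xi = - (\<Sum>i<length y. ln (xi (i, y ! i)))"

definition phi :: "nat \<Rightarrow> nat \<Rightarrow> nat list \<Rightarrow> (nat \<times> nat \<Rightarrow> real) \<Rightarrow> real" where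
  "phi n k y xi = Min {cost_d (take k (drop i y)) (\<lambda>(l, t). xi ((j + l) mod n, t)) |i j.
                        i + k \<le> length y \<and> j < n}"

definition alpha :: "(nat list \<Rightarrow> nat pmf) \<Rightarrow> nat list \<Rightarrow> real" where
  "alpha p y = 1 - (1 / real (length y)) * (\<Sum>i<length y. pmf (p (take i y)) (y ! i))"

text \<open>Uniform distribution on Xi^n = ([0,1]^N)^n: all nN coordinates iid Unif[0,1].\<close>
definition key_space :: "nat \<Rightarrow> nat \<Rightarrow> (nat \<times> nat \<Rightarrow> real) measure" where
  "key_space N n = PiM ({0..<n} \<times> {0..<N}) (\<lambda>_. uniform_measure lborel {0..1::real})"

end

theory Submission
  imports Defs
begin

text \<open>Let \<open>q\<^sub>i\<close> be the probability of the \<open>i\<close>-th token of \<open>y\<close> given its prefix and \<open>\<lambda> = \<alpha>(y)/4\<close>.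
  Conditionally on the coordinate \<open>\<xi>\<^sub>i\<^sub>,\<^sub>y\<^sub>i = s\<close>, the decoder outputs \<open>y\<^sub>i\<close> exactly when every
  other coordinate \<open>\<xi>\<^sub>i\<^sub>,\<^sub>j\<close> lies below \<open>s\<^bsup>\<mu>(j)/q\<^sub>i\<^esup>\<close> (up to a null set of ties), which happens with
  probability \<open>s\<^bsup>(1-q\<^sub>i)/q\<^sub>i\<^esup>\<close>. Integrating over \<open>s\<close> and using the independence of the rows of
  the key gives \<open>P(Y = y) = \<Prod> q\<^sub>i\<close> and \<open>E[e\<^bsup>\<lambda> d(y,\<xi>)\<^esup>; Y = y] = \<Prod> q\<^sub>i/(1 - \<lambda> q\<^sub>i)\<close>, while
  for the independent key \<open>\<xi>'\<close> and every cyclic shift of it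
  \<open>E[e\<^bsup>-\<lambda> d(y,shifted \<xi>')\<^esup>] = (1 + \<lambda>)\<^bsup>-m\<^esup>\<close>. Since \<open>\<phi>(y,\<xi>) \<le> d(y,\<xi>)\<close> and \<open>\<phi>(y,\<xi>')\<close> is
  attained at one of the \<open>n\<close> shifts, Markov's inequality and a union bound give
  \<open>P(\<phi>(y,\<xi>') \<le> \<phi>(y,\<xi>) | Y = y) \<le> n \<Prod> 1/((1 + \<lambda>)(1 - \<lambda> q\<^sub>i))\<close>, and the elementary bounds
  \<open>ln (1 + \<lambda>) \<ge> \<lambda> - \<lambda>\<^sup>2\<close>, \<open>ln (1 - x) \<ge> -x - x\<^sup>2\<close> turn the product into \<open>exp (-m \<alpha>\<^sup>2/8)\<close>.\<close>

section \<open>The uniform distribution on the unit interval\<close>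

abbreviation uniform01 :: "real measure" where
  "uniform01 \<equiv> uniform_measure lborel {0..1}"

lemma sets_uniform01: "sets uniform01 = sets borel"
  by simp

lemma prob_space_uniform01: "prob_space uniform01"
  by (intro prob_space_uniform_measure) auto

interpretation uniform01: product_sigma_finite "\<lambda>_::nat \<times> nat. uniform01"
  unfolding product_sigma_finite_def
  using prob_space_uniform01 prob_space_imp_sigma_finite by blast

lemma AE_uniform01: "AE s in uniform01. 0 < s \<and> s \<le> 1"
proof -
  have "AE s in lborel. s \<noteq> (0::real)"
    by (intro AE_I'[of "{0}"]) auto
  then show ?thesis
    by (intro AE_uniform_measureI) (auto elim!: eventually_mono)
qed

lemma emeasure_uniform01_UNIV: "emeasure uniform01 UNIV = 1"
  using prob_space.emeasure_space_1[OF prob_space_uniform01] by simp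

lemma emeasure_uniform01_atMost:
  assumes "0 \<le> a" "a \<le> 1"
  shows "emeasure uniform01 {..a} = ennreal a"
proof -
  have "{0..1} \<inter> {..a} = {0..a}" using assms by auto
  then show ?thesis using assms by (simp add: emeasure_uniform_measure divide_ennreal_def)
qed

lemma emeasure_uniform01_lessThan:
  assumes "0 \<le> a" "a \<le> 1"
  shows "emeasure uniform01 {..<a} = ennreal a"
proof -
  have "{0..1} \<inter> {..<a} = {0..<a}" using assms by auto
  then show ?thesis using assms by (simp add: emeasure_uniform_measure divide_ennreal_def)
qed

lemma nn_integral_uniform01_powr:
  assumes "c > -1"
  shows "(\<integral>\<^sup>+s. ennreal (s powr c) \<partial>uniform01) = ennreal (1 / (c + 1))"
proof -
  have "(\<integral>\<^sup>+s. ennreal (s powr c) \<partial>uniform01) = (\<integral>\<^sup>+s. ennreal (indicator {0..1} s * s powr c) \<partial>lborel)"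
    by (subst nn_integral_uniform_measure)
       (auto simp: divide_ennreal_def intro!: nn_integral_cong split: split_indicator)
  also have "\<dots> = ennreal (1 / (c + 1))"
    using has_integral_powr_from_0[OF assms, of 1] assms
    by (intro nn_integral_has_integral_lebesgue) auto
  finally show ?thesis .
qed

lemma emeasure_PiM_uniform01_PiE:
  fixes K :: "(nat \<times> nat) set"
  assumes "finite K" and "\<And>c. c \<in> K \<Longrightarrow> A c \<in> sets borel \<and> emeasure uniform01 (A c) = ennreal (t c)"
    and "\<And>c. c \<in> K \<Longrightarrow> 0 \<le> t c"
  shows "emeasure (Pi\<^sub>M K (\<lambda>_. uniform01)) (Pi\<^sub>E K A) = ennreal (\<Prod>c\<in>K. t c)"
proof -
  have "emeasure (Pi\<^sub>M K (\<lambda>_. uniform01)) (Pi\<^sub>E K A) = (\<Prod>c\<in>K. emeasure uniform01 (A c))"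
    by (rule uniform01.emeasure_PiM) (use assms in auto)
  also have "\<dots> = (\<Prod>c\<in>K. ennreal (t c))"
    using assms(2) by (intro prod.cong) (auto simp del: emeasure_uniform_measure)
  finally show ?thesis
    using assms(3) by (simp add: prod_ennreal)
qed

lemma nn_integral_PiM_prod_distinct_components:
  fixes c :: "nat \<Rightarrow> 'i" and g :: "'a \<Rightarrow> ennreal"
  assumes M: "prob_space M" and I: "finite I" and c: "inj_on c {..<k}" "c ` {..<k} \<subseteq> I"
    and g: "g \<in> borel_measurable M"
  shows "(\<integral>\<^sup>+x. (\<Prod>l<k. g (x (c l))) \<partial>Pi\<^sub>M I (\<lambda>_. M)) = (\<integral>\<^sup>+u. g u \<partial>M) ^ k"
proof -
  interpret product_sigma_finite "\<lambda>_::'i. M"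
    unfolding product_sigma_finite_def using M prob_space_imp_sigma_finite by blast
  define f where "f d = (if d \<in> c ` {..<k} then g else (\<lambda>_. 1))" for d
  have "(\<Prod>l<k. g (x (c l))) = (\<Prod>d\<in>I. f d (x d))" for x
  proof -
    have "(\<Prod>l<k. g (x (c l))) = (\<Prod>d\<in>c ` {..<k}. g (x d))"
      using c(1) by (simp add: prod.reindex)
    also have "\<dots> = (\<Prod>d\<in>I. f d (x d))"
      by (rule prod.mono_neutral_cong_left[OF I c(2)]) (auto simp: f_def)
    finally show ?thesis .
  qed
  then have "(\<integral>\<^sup>+x. (\<Prod>l<k. g (x (c l))) \<partial>Pi\<^sub>M I (\<lambda>_. M)) = (\<integral>\<^sup>+x. (\<Prod>d\<in>I. f d (x d)) \<partial>Pi\<^sub>M I (\<lambda>_. M))"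
    by simp
  also have "\<dots> = (\<Prod>d\<in>I. integral\<^sup>N M (f d))"
    by (rule product_nn_integral_prod[OF I]) (simp add: f_def g)
  also have "\<dots> = (\<Prod>d\<in>c ` {..<k}. integral\<^sup>N M g)"
    using prob_space.emeasure_space_1[OF M]
    by (intro prod.mono_neutral_cong_right[OF I c(2)]) (auto simp: f_def)
  also have "\<dots> = (\<integral>\<^sup>+u. g u \<partial>M) ^ k"
    using card_image[OF c(1)] by simp
  finally show ?thesis .
qed

lemma nn_integral_PiM_prod_rows:
  fixes G :: "nat \<Rightarrow> (nat \<Rightarrow> 'a) \<Rightarrow> ennreal" and M :: "'a measure"
  assumes M: "prob_space M"
    and meas: "\<And>i J. (\<lambda>x. G i (\<lambda>t. x (i, t))) \<in> borel_measurable (Pi\<^sub>M J (\<lambda>_::nat \<times> nat. M))"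
  shows "(\<integral>\<^sup>+x. (\<Prod>i<k. G i (\<lambda>t. x (i, t))) \<partial>Pi\<^sub>M ({0..<k} \<times> {0..<N}) (\<lambda>_. M))
       = (\<Prod>i<k. \<integral>\<^sup>+x. G i (\<lambda>t. x (i, t)) \<partial>Pi\<^sub>M ({i} \<times> {0..<N}) (\<lambda>_. M))"
proof (induction k)
  case 0
  then show ?case by (simp add: PiM_empty)
next
  case (Suc k)
  interpret product_sigma_finite "\<lambda>_::nat \<times> nat. M"
    unfolding product_sigma_finite_def using M prob_space_imp_sigma_finite by blast
  define I where "I = {0..<k} \<times> {0..<N}"
  define J where "J = {k} \<times> {0..<N}"
  have IJ: "I \<inter> J = {}" "finite I" "finite J" and rows: "{0..<Suc k} \<times> {0..<N} = I \<union> J"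
    by (auto simp: I_def J_def)
  have row_I: "(\<lambda>t. merge I J (x, z) (i, t)) = (\<lambda>t. x (i, t))"
    if "x \<in> space (Pi\<^sub>M I (\<lambda>_. M))" "i < k" for x z i
    using that by (auto simp: fun_eq_iff merge_def I_def J_def space_PiM PiE_def extensional_def)
  have row_J: "(\<lambda>t. merge I J (x, z) (k, t)) = (\<lambda>t. z (k, t))"
    if "z \<in> space (Pi\<^sub>M J (\<lambda>_. M))" for x z
    using that by (auto simp: fun_eq_iff merge_def I_def J_def space_PiM PiE_def extensional_def)
  have "(\<integral>\<^sup>+x. (\<Prod>i<Suc k. G i (\<lambda>t. x (i, t))) \<partial>Pi\<^sub>M (I \<union> J) (\<lambda>_. M))
      = (\<integral>\<^sup>+x. \<integral>\<^sup>+z. (\<Prod>i<Suc k. G i (\<lambda>t. merge I J (x, z) (i, t))) \<partial>Pi\<^sub>M J (\<lambda>_. M) \<partial>Pi\<^sub>M I (\<lambda>_. M))"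
    by (rule product_nn_integral_fold[OF IJ]) (intro borel_measurable_prod_ennreal meas)
  also have "\<dots> = (\<integral>\<^sup>+x. (\<Prod>i<k. G i (\<lambda>t. x (i, t))) *
        (\<integral>\<^sup>+z. G k (\<lambda>t. z (k, t)) \<partial>Pi\<^sub>M J (\<lambda>_. M)) \<partial>Pi\<^sub>M I (\<lambda>_. M))"
    by (intro nn_integral_cong)
      (simp add: row_I row_J nn_integral_cmult[OF meas, symmetric] cong: nn_integral_cong)
  also have "\<dots> = (\<integral>\<^sup>+x. (\<Prod>i<k. G i (\<lambda>t. x (i, t))) \<partial>Pi\<^sub>M I (\<lambda>_. M)) *
        (\<integral>\<^sup>+z. G k (\<lambda>t. z (k, t)) \<partial>Pi\<^sub>M J (\<lambda>_. M))"
    by (rule nn_integral_multc) (intro borel_measurable_prod_ennreal meas)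
  finally show ?case
    using Suc.IH by (simp add: rows I_def J_def)
qed

lemma nn_integral_PiM_prod_first_rows:
  fixes G :: "nat \<Rightarrow> (nat \<Rightarrow> 'a) \<Rightarrow> ennreal" and M :: "'a measure"
  assumes M: "prob_space M"
    and meas: "\<And>i J. (\<lambda>x. G i (\<lambda>t. x (i, t))) \<in> borel_measurable (Pi\<^sub>M J (\<lambda>_::nat \<times> nat. M))"
    and "m \<le> n"
  shows "(\<integral>\<^sup>+x. (\<Prod>i<m. G i (\<lambda>t. x (i, t))) \<partial>Pi\<^sub>M ({0..<n} \<times> {0..<N}) (\<lambda>_. M))
       = (\<Prod>i<m. \<integral>\<^sup>+x. G i (\<lambda>t. x (i, t)) \<partial>Pi\<^sub>M ({i} \<times> {0..<N}) (\<lambda>_. M))"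
proof -
  define G' where "G' i = (if i < m then G i else (\<lambda>_. 1))" for i
  have prod_G': "(\<Prod>i<n. f i) = (\<Prod>i<m. f i)" if "\<And>i. m \<le> i \<Longrightarrow> f i = 1" for f :: "nat \<Rightarrow> ennreal"
    using that \<open>m \<le> n\<close> by (intro prod.mono_neutral_right) auto
  have "(\<integral>\<^sup>+x. (\<Prod>i<m. G i (\<lambda>t. x (i, t))) \<partial>Pi\<^sub>M ({0..<n} \<times> {0..<N}) (\<lambda>_. M))
      = (\<integral>\<^sup>+x. (\<Prod>i<n. G' i (\<lambda>t. x (i, t))) \<partial>Pi\<^sub>M ({0..<n} \<times> {0..<N}) (\<lambda>_. M))"
    by (simp add: prod_G' G'_def)
  also have "\<dots> = (\<Prod>i<n. \<integral>\<^sup>+x. G' i (\<lambda>t. x (i, t)) \<partial>Pi\<^sub>M ({i} \<times> {0..<N}) (\<lambda>_. M))"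
    by (rule nn_integral_PiM_prod_rows[OF M]) (simp add: G'_def meas)
  also have "\<dots> = (\<Prod>i<m. \<integral>\<^sup>+x. G i (\<lambda>t. x (i, t)) \<partial>Pi\<^sub>M ({i} \<times> {0..<N}) (\<lambda>_. M))"
    by (subst prod_G') (simp_all add: G'_def prob_space.emeasure_space_1 prob_space_PiM M)
  finally show ?thesis .
qed

lemma nn_integral_pair_measure_mult:
  assumes "sigma_finite_measure M'" and [measurable]: "f \<in> borel_measurable M" "g \<in> borel_measurable M'"
  shows "(\<integral>\<^sup>+w. f (fst w) * g (snd w) \<partial>(M \<Otimes>\<^sub>M M')) = integral\<^sup>N M f * integral\<^sup>N M' g"
proof -
  interpret M': sigma_finite_measure M' by (rule assms(1))
  have "(\<integral>\<^sup>+w. f (fst w) * g (snd w) \<partial>(M \<Otimes>\<^sub>M M')) = (\<integral>\<^sup>+x. \<integral>\<^sup>+z. f x * g z \<partial>M' \<partial>M)"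
    by (subst M'.nn_integral_fst[symmetric]) simp_all
  also have "\<dots> = (\<integral>\<^sup>+x. f x * integral\<^sup>N M' g \<partial>M)"
    by (intro nn_integral_cong nn_integral_cmult) simp
  also have "\<dots> = integral\<^sup>N M f * integral\<^sup>N M' g"
    by (rule nn_integral_multc) simp
  finally show ?thesis .
qed

lemma emeasure_pair_le_sum_exponential_moments:
  fixes D :: "'a \<Rightarrow> real" and C :: "nat \<Rightarrow> 'b \<Rightarrow> real"
  assumes M': "sigma_finite_measure M'"
    and [measurable]: "B \<in> sets M" "D \<in> borel_measurable M" "\<And>j. C j \<in> borel_measurable M'"
    and lam: "0 \<le> lam"
    and A: "\<And>w. w \<in> A \<Longrightarrow> fst w \<in> B \<and> (\<exists>j<n. C j (snd w) \<le> D (fst w))"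
  shows "emeasure (M \<Otimes>\<^sub>M M') A \<le> (\<Sum>j<n. (\<integral>\<^sup>+x. ennreal (exp (lam * D x)) * indicator B x \<partial>M) *
                                         (\<integral>\<^sup>+z. ennreal (exp (- lam * C j z)) \<partial>M'))"
proof (cases "A \<in> sets (M \<Otimes>\<^sub>M M')")
  case False
  then show ?thesis by (simp add: emeasure_notin_sets)
next
  case True
  define F where "F = (\<lambda>x. ennreal (exp (lam * D x)) * indicator B x)"
  define G where "G = (\<lambda>j z. ennreal (exp (- lam * C j z)))"
  have [measurable]: "F \<in> borel_measurable M" "G j \<in> borel_measurable M'" for j
    unfolding F_def G_def by measurable
  have "emeasure (M \<Otimes>\<^sub>M M') A = (\<integral>\<^sup>+w. indicator A w \<partial>(M \<Otimes>\<^sub>M M'))"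
    using True by simp
  also have "\<dots> \<le> (\<integral>\<^sup>+w. (\<Sum>j<n. F (fst w) * G j (snd w)) \<partial>(M \<Otimes>\<^sub>M M'))"
  proof (intro nn_integral_mono)
    fix w
    show "indicator A w \<le> (\<Sum>j<n. F (fst w) * G j (snd w))"
    proof (cases "w \<in> A")
      case True
      then obtain j where j: "j < n" "C j (snd w) \<le> D (fst w)" and "fst w \<in> B"
        using A by blast
      then have "F (fst w) * G j (snd w) = ennreal (exp (lam * (D (fst w) - C j (snd w))))"
        by (simp add: F_def G_def exp_diff right_diff_distrib exp_minus divide_inverse flip: ennreal_mult)
      also have "1 \<le> \<dots>"
        using j lam by simp
      also have "F (fst w) * G j (snd w) \<le> (\<Sum>j<n. F (fst w) * G j (snd w))"
        using j by (intro member_le_sum) auto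
      finally show ?thesis
        using True by simp
    qed simp
  qed
  also have "\<dots> = (\<Sum>j<n. \<integral>\<^sup>+w. F (fst w) * G j (snd w) \<partial>(M \<Otimes>\<^sub>M M'))"
    by (intro nn_integral_sum) measurable
  also have "\<dots> = (\<Sum>j<n. integral\<^sup>N M F * integral\<^sup>N M' (G j))"
    by (simp add: nn_integral_pair_measure_mult[OF M'])
  finally show ?thesis
    by (simp only: F_def G_def)
qed

lemma nn_integral_cmult_indicator_squeeze:
  assumes "A \<in> sets M" "B \<in> sets M" "emeasure M A = e" "emeasure M B = e"
    and "\<And>x. x \<in> A \<Longrightarrow> P x" "\<And>x. x \<in> space M \<Longrightarrow> P x \<Longrightarrow> x \<in> B"
  shows "(\<integral>\<^sup>+x. c * indicator {x. P x} x \<partial>M) = c * e"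
proof (rule antisym)
  have "(\<integral>\<^sup>+x. c * indicator {x. P x} x \<partial>M) \<le> (\<integral>\<^sup>+x. c * indicator B x \<partial>M)"
    using assms(6) by (intro nn_integral_mono) (auto split: split_indicator)
  then show "(\<integral>\<^sup>+x. c * indicator {x. P x} x \<partial>M) \<le> c * e"
    using assms(2,4) by (simp add: nn_integral_cmult_indicator)
  have "(\<integral>\<^sup>+x. c * indicator A x \<partial>M) \<le> (\<integral>\<^sup>+x. c * indicator {x. P x} x \<partial>M)"
    using assms(5) by (intro nn_integral_mono) (auto split: split_indicator)
  then show "c * e \<le> (\<integral>\<^sup>+x. c * indicator {x. P x} x \<partial>M)"
    using assms(1,3) by (simp add: nn_integral_cmult_indicator)
qed

lemma measure_pair_measure_fst:
  assumes "prob_space M'" and "{x \<in> space M. P x} \<in> sets M"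
  shows "measure (M \<Otimes>\<^sub>M M') {w \<in> space (M \<Otimes>\<^sub>M M'). P (fst w)} = measure M {x \<in> space M. P x}"
proof -
  interpret M': prob_space M' by (rule assms(1))
  have "{w \<in> space (M \<Otimes>\<^sub>M M'). P (fst w)} = {x \<in> space M. P x} \<times> space M'"
    by (auto simp: space_pair_measure)
  then show ?thesis
    using assms(2) by (simp add: measure_def M'.emeasure_pair_measure_Times M'.emeasure_space_1)
qed

section \<open>The exponential-minimum decoder\<close>

lemma gumbel_score_le_iff_powr:
  assumes "0 < s" "0 < q" "0 < w"
  shows "gumbel_score s q \<le> gumbel_score u w \<longleftrightarrow> u \<le> s powr (w / q)"
proof (cases "u \<le> 0")
  case True
  then show ?thesis using assms by (simp add: gumbel_score_def order.trans[OF True])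
next
  case False
  have "u \<le> s powr (w / q) \<longleftrightarrow> ln u \<le> ln (s powr (w / q))"
    using False assms by (intro ln_le_cancel_iff[symmetric]) auto
  also have "\<dots> \<longleftrightarrow> - ln s / q \<le> - ln u / w"
    using assms by (simp add: ln_powr field_simps)
  finally show ?thesis using False assms by (simp add: gumbel_score_def)
qed

lemma gumbel_score_less_iff_powr:
  assumes "0 < s" "0 < q" "0 < w"
  shows "gumbel_score s q < gumbel_score u w \<longleftrightarrow> u < s powr (w / q)"
proof (cases "u \<le> 0")
  case True
  then show ?thesis using assms by (simp add: gumbel_score_def order.strict_trans1[OF True])
next
  case False
  have "u < s powr (w / q) \<longleftrightarrow> ln u < ln (s powr (w / q))"
    using False assms by (intro ln_less_cancel_iff[symmetric]) auto
  also have "\<dots> \<longleftrightarrow> - ln s / q < - ln u / w"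
    using assms by (simp add: ln_powr field_simps)
  finally show ?thesis using False assms by (simp add: gumbel_score_def)
qed

lemma gumbel_score_decoder_le:
  assumes "j < N"
  shows "gumbel_score (r (decoder N r mu)) (mu (decoder N r mu)) \<le> gumbel_score (r j) (mu j)"
proof -
  let ?s = "\<lambda>k. gumbel_score (r k) (mu k)"
  obtain k where "k < N" "?s k = Min (?s ` {..<N})"
    using Min_in[of "?s ` {..<N}"] assms by fastforce
  then have "k < N \<and> (\<forall>j<N. ?s k \<le> ?s j)"
    by auto
  then have "decoder N r mu < N \<and> (\<forall>j<N. ?s (decoder N r mu) \<le> ?s j)"
    unfolding decoder_def by (rule LeastI)
  then show ?thesis
    using assms by auto
qed

lemma decoder_eqI:
  assumes "y < N" "\<And>j. j < N \<Longrightarrow> j \<noteq> y \<Longrightarrow> gumbel_score (r y) (mu y) < gumbel_score (r j) (mu j)"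
  shows "decoder N r mu = y"
  unfolding decoder_def
proof (rule Least_equality)
  show "y < N \<and> (\<forall>j<N. gumbel_score (r y) (mu y) \<le> gumbel_score (r j) (mu j))"
    using assms by (metis order.order_iff_strict)
next
  fix k assume "k < N \<and> (\<forall>j<N. gumbel_score (r k) (mu k) \<le> gumbel_score (r j) (mu j))"
  then show "y \<le> k" using assms by (metis le_refl not_le)
qed

lemma decoder_eq_if_less_powr:
  assumes "y < N" "0 < r y" "0 < w y"
    and below: "\<And>j. j < N \<Longrightarrow> j \<noteq> y \<Longrightarrow> 0 < w j \<Longrightarrow> r j < r y powr (w j / w y)"
  shows "decoder N r w = y"
proof (rule decoder_eqI[OF assms(1)])
  fix j assume j: "j < N" "j \<noteq> y"
  show "gumbel_score (r y) (w y) < gumbel_score (r j) (w j)"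
  proof (cases "0 < w j")
    case True
    then show ?thesis using below[OF j True] assms by (simp add: gumbel_score_less_iff_powr)
  next
    case False
    then show ?thesis using assms by (simp add: gumbel_score_def)
  qed
qed

lemma le_powr_if_decoder_eq:
  assumes "decoder N r w = y" "j < N" "0 < r y" "0 < w y" "0 < w j"
  shows "r j \<le> r y powr (w j / w y)"
  using gumbel_score_decoder_le[of j N r w] assms by (simp add: gumbel_score_le_iff_powr)

lemma generate_eq_iff:
  "generate N p xi k = y \<longleftrightarrow>
     length y = k \<and> (\<forall>i<k. decoder N (\<lambda>t. xi (i, t)) (pmf (p (take i y))) = y ! i)"
proof (induction k arbitrary: y)
  case 0
  then show ?case by auto
next
  case (Suc k)
  show ?case
  proof
    assume "generate N p xi (Suc k) = y"
    then show "length y = Suc k \<and> (\<forall>i<Suc k. decoder N (\<lambda>t. xi (i, t)) (pmf (p (take i y))) = y ! i)"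
      using Suc.IH[of "generate N p xi k"] by (auto simp: Let_def nth_append less_Suc_eq)
  next
    assume r: "length y = Suc k \<and> (\<forall>i<Suc k. decoder N (\<lambda>t. xi (i, t)) (pmf (p (take i y))) = y ! i)"
    then have "generate N p xi k = take k y"
      using Suc.IH by (auto simp: min_def)
    moreover have "y = take k y @ [y ! k]"
      using r by (metis lessI take_Suc_conv_app_nth take_all order_refl)
    ultimately show "generate N p xi (Suc k) = y"
      using r by (metis generate.simps(2) lessI)
  qed
qed

lemma measurable_component_borel:
  fixes c :: 'i
  assumes "sets M = sets (borel :: 'a::topological_space measure)"
  shows "(\<lambda>x. x c) \<in> borel_measurable (Pi\<^sub>M J (\<lambda>_::'i. M))"
proof (cases "c \<in> J")
  case True
  then show ?thesis
    using measurable_component_singleton[of c J "\<lambda>_. M"] measurable_cong_sets[OF refl assms] by blast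
next
  case False
  then have "\<And>x. x \<in> space (Pi\<^sub>M J (\<lambda>_. M)) \<Longrightarrow> x c = undefined"
    by (auto simp: space_PiM PiE_def extensional_def)
  then show ?thesis by (subst measurable_cong[where g = "\<lambda>_. undefined"]) auto
qed

lemmas measurable_key_component[measurable] =
  measurable_component_borel[OF sets_uniform01]

lemma pred_gumbel_score_le[measurable]:
  assumes [measurable]: "f \<in> borel_measurable M" "g \<in> borel_measurable M"
  shows "Measurable.pred M (\<lambda>x. gumbel_score (f x) v \<le> gumbel_score (g x) w)"
  unfolding Measurable.pred_def gumbel_score_def by (intro borel_measurable_le) measurable

lemma measurable_decoder_row[measurable]:
  "(\<lambda>x. decoder N (\<lambda>t. x (i, t)) mu) \<in> measurable (Pi\<^sub>M J (\<lambda>_::nat \<times> nat. uniform01)) (count_space UNIV)"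
proof -
  have "decoder N r mu = (LEAST k. k \<in> {..<N} \<and>
      (\<forall>j\<in>{..<N}. gumbel_score (r k) (mu k) \<le> gumbel_score (r j) (mu j)))" for r
    unfolding decoder_def by (simp add: Ball_def)
  then show ?thesis by (simp only:) measurable
qed

lemma pred_generate_eq[measurable]:
  "Measurable.pred (Pi\<^sub>M J (\<lambda>_::nat \<times> nat. uniform01)) (\<lambda>x. generate N p x k = y)"
  unfolding generate_eq_iff by measurable

section \<open>Decoding one row of the key\<close>

lemma prod_powr_pmf_others:
  fixes mu :: "nat pmf"
  assumes supp: "set_pmf mu \<subseteq> {0..<N}" and "y < N" "0 < s"
  shows "(\<Prod>c\<in>{i} \<times> ({0..<N} - {y}). s powr (pmf mu (snd c) / pmf mu y))
       = s powr ((1 - pmf mu y) / pmf mu y)"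
proof -
  have "(\<Sum>j\<in>{0..<N}. pmf mu j) = 1"
    by (rule sum_pmf_eq_1) (use supp in auto)
  then have "(\<Sum>j\<in>{0..<N} - {y}. pmf mu j) = 1 - pmf mu y"
    using sum.remove[of "{0..<N}" y "pmf mu"] \<open>y < N\<close> by simp
  then have "(\<Prod>j\<in>{0..<N} - {y}. s powr (pmf mu j / pmf mu y)) = s powr ((1 - pmf mu y) / pmf mu y)"
    using \<open>0 < s\<close> by (simp add: powr_sum[symmetric] sum_divide_distrib[symmetric])
  then show ?thesis
    by (subst prod.reindex_bij_witness[of _ "Pair i" snd]) auto
qed

text \<open>Ties have probability zero, so the event that the decoder picks \<open>y\<close> is squeezed between
  two boxes of equal measure, one with strict and one with non-strict thresholds. The constant
  factor \<open>c\<close> spares the measurability side condition of \<open>nn_integral_cmult\<close>.\<close>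

lemma nn_integral_decoder_section:
  fixes mu :: "nat pmf" and i N :: nat
  assumes supp: "set_pmf mu \<subseteq> {0..<N}" and y: "0 < pmf mu y" and s: "0 < s" "s \<le> 1"
  defines "q \<equiv> pmf mu y" and "K \<equiv> {i} \<times> ({0..<N} - {y})"
  shows "(\<integral>\<^sup>+x. c * indicator {x. decoder N (\<lambda>t. x (i, t)) (pmf mu) = y} (x((i, y) := s))
           \<partial>Pi\<^sub>M K (\<lambda>_. uniform01)) = c * ennreal (s powr ((1 - q) / q))"
proof -
  have "y \<in> set_pmf mu"
    using y by (simp add: set_pmf_iff)
  then have "y < N"
    using supp by auto
  define D where "D = {x. decoder N (\<lambda>t. x (i, t)) (pmf mu) = y}"
  define thr where "thr c = s powr (pmf mu (snd c) / q)" for c :: "nat \<times> nat"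
  define Lo :: "nat \<times> nat \<Rightarrow> real set" where "Lo c = (if pmf mu (snd c) = 0 then UNIV else {..<thr c})" for c
  define Hi :: "nat \<times> nat \<Rightarrow> real set" where "Hi c = (if pmf mu (snd c) = 0 then UNIV else {..thr c})" for c
  have pmf_pos_iff: "0 < pmf mu j \<longleftrightarrow> pmf mu j \<noteq> 0" for j
    using pmf_nonneg[of mu j] by linarith
  have thr: "0 \<le> thr c" "thr c \<le> 1" for c
    using s y by (auto simp: thr_def q_def intro!: powr_le1)
  have prod_thr: "(\<Prod>c\<in>K. thr c) = s powr ((1 - q) / q)"
    unfolding K_def thr_def q_def by (rule prod_powr_pmf_others[OF supp \<open>y < N\<close> s(1)])
  have box: "emeasure (Pi\<^sub>M K (\<lambda>_. uniform01)) (Pi\<^sub>E K Lo) = ennreal (s powr ((1 - q) / q))"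
    "emeasure (Pi\<^sub>M K (\<lambda>_. uniform01)) (Pi\<^sub>E K Hi) = ennreal (s powr ((1 - q) / q))"
    unfolding prod_thr[symmetric] using thr s
    by (auto simp: K_def Lo_def Hi_def emeasure_uniform01_lessThan emeasure_uniform01_atMost
        emeasure_uniform01_UNIV thr_def simp del: emeasure_uniform_measure
        intro!: emeasure_PiM_uniform01_PiE)
  have lo: "x((i, y) := s) \<in> D" if x: "x \<in> Pi\<^sub>E K Lo" for x
  proof -
    have "x (i, j) < thr (i, j)" if "j < N" "j \<noteq> y" "0 < pmf mu j" for j
      using PiE_mem[OF x, of "(i, j)"] that by (simp add: K_def Lo_def)
    then show ?thesis
      unfolding D_def using s y \<open>y < N\<close> by (auto simp: thr_def q_def intro!: decoder_eq_if_less_powr)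
  qed
  have hi: "x \<in> Pi\<^sub>E K Hi" if x: "x \<in> space (Pi\<^sub>M K (\<lambda>_. uniform01))" "x((i, y) := s) \<in> D" for x
  proof -
    have "x (i, j) \<le> thr (i, j)" if "j < N" "j \<noteq> y" "0 < pmf mu j" for j
      using le_powr_if_decoder_eq[of N "\<lambda>t. (x((i, y) := s)) (i, t)" "pmf mu" y j] x(2) that s y
      by (simp add: D_def thr_def q_def)
    then show ?thesis
      using x(1) by (auto simp: space_PiM PiE_iff K_def Hi_def pmf_pos_iff)
  qed
  have "(\<integral>\<^sup>+x. c * indicator {x. x((i, y) := s) \<in> D} x \<partial>Pi\<^sub>M K (\<lambda>_. uniform01)) = c * ennreal (s powr ((1 - q) / q))"
    using lo hi box
    by (intro nn_integral_cmult_indicator_squeeze[where A = "Pi\<^sub>E K Lo" and B = "Pi\<^sub>E K Hi"])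
      (auto simp: K_def Lo_def Hi_def intro!: sets_PiM_I_finite)
  then show ?thesis
    by (simp add: D_def indicator_def)
qed

lemma AE_decoder_neq_if_pmf_zero:
  fixes mu :: "nat pmf" and i N :: nat
  assumes supp: "set_pmf mu \<subseteq> {0..<N}" and y: "pmf mu y = 0"
  shows "AE x in Pi\<^sub>M ({i} \<times> {0..<N}) (\<lambda>_. uniform01). decoder N (\<lambda>t. x (i, t)) (pmf mu) \<noteq> y"
proof -
  obtain j where "j \<in> set_pmf mu"
    using set_pmf_not_empty by fast
  then have j: "j < N" "0 < pmf mu j"
    using supp by (auto simp: pmf_positive)
  have "AE x in Pi\<^sub>M ({i} \<times> {0..<N}) (\<lambda>_. uniform01). 0 < x (i, j)"
    using AE_uniform01 j by (intro AE_PiM_component) (auto simp: prob_space_uniform01 elim: eventually_mono)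
  then show ?thesis
  proof eventually_elim
    fix x :: "nat \<times> nat \<Rightarrow> real"
    assume "0 < x (i, j)"
    then have "\<not> gumbel_score (x (i, y)) (pmf mu y) \<le> gumbel_score (x (i, j)) (pmf mu j)"
      using y j by (simp add: gumbel_score_def)
    then show "decoder N (\<lambda>t. x (i, t)) (pmf mu) \<noteq> y"
      using gumbel_score_decoder_le[of j N "\<lambda>t. x (i, t)" "pmf mu"] j by auto
  qed
qed

lemma nn_integral_decoder_row_pos:
  fixes mu :: "nat pmf" and i N y :: nat
  assumes supp: "set_pmf mu \<subseteq> {0..<N}" and y: "0 < pmf mu y" and lam: "0 \<le> lam" "lam < 1"
  defines "q \<equiv> pmf mu y"
  shows "(\<integral>\<^sup>+x. ennreal (exp (- lam * ln (x (i, y)))) * indicator {x. decoder N (\<lambda>t. x (i, t)) (pmf mu) = y} x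
           \<partial>Pi\<^sub>M ({i} \<times> {0..<N}) (\<lambda>_. uniform01)) = ennreal (q / (1 - lam * q))"
proof -
  define D where "D = {x. decoder N (\<lambda>t. x (i, t)) (pmf mu) = y}"
  define K where "K = {i} \<times> ({0..<N} - {y})"
  have "y \<in> set_pmf mu"
    using y by (simp add: set_pmf_iff)
  then have row: "{i} \<times> {0..<N} = insert (i, y) K" "(i, y) \<notin> K" "finite K"
    using supp by (auto simp: K_def)
  have "lam * q < 1"
    using mult_left_le[of q lam] pmf_le_1[of mu y] lam by (simp add: q_def)
  have "(\<integral>\<^sup>+x. ennreal (exp (- lam * ln (x (i, y)))) * indicator D x \<partial>Pi\<^sub>M ({i} \<times> {0..<N}) (\<lambda>_. uniform01))
      = (\<integral>\<^sup>+s. \<integral>\<^sup>+x. ennreal (exp (- lam * ln s)) * indicator D (x((i, y) := s))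
           \<partial>Pi\<^sub>M K (\<lambda>_. uniform01) \<partial>uniform01)"
    unfolding row(1) D_def by (subst uniform01.product_nn_integral_insert_rev) (simp_all add: row(2,3))
  also have "\<dots> = (\<integral>\<^sup>+s. ennreal (s powr ((1 - q) / q - lam)) \<partial>uniform01)"
    using AE_uniform01
  proof (intro nn_integral_cong_AE, eventually_elim)
    fix s :: real
    assume s: "0 < s \<and> s \<le> 1"
    have "ennreal (exp (- lam * ln s)) * ennreal (s powr ((1 - q) / q)) = ennreal (s powr ((1 - q) / q - lam))"
      using s by (simp add: powr_def exp_add[symmetric] algebra_simps flip: ennreal_mult)
    then show "(\<integral>\<^sup>+x. ennreal (exp (- lam * ln s)) * indicator D (x((i, y) := s)) \<partial>Pi\<^sub>M K (\<lambda>_. uniform01))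
        = ennreal (s powr ((1 - q) / q - lam))"
      using nn_integral_decoder_section[OF supp y, of s] s by (simp add: K_def D_def q_def)
  qed
  also have "\<dots> = ennreal (1 / ((1 - q) / q - lam + 1))"
    using y \<open>lam * q < 1\<close> by (intro nn_integral_uniform01_powr) (simp add: field_simps q_def)
  also have "1 / ((1 - q) / q - lam + 1) = q / (1 - lam * q)"
    using y by (simp add: field_simps q_def)
  finally show ?thesis
    by (simp only: D_def)
qed

lemma nn_integral_decoder_row:
  fixes mu :: "nat pmf" and i N y :: nat
  assumes supp: "set_pmf mu \<subseteq> {0..<N}" and lam: "0 \<le> lam" "lam < 1"
  defines "q \<equiv> pmf mu y"
  shows "(\<integral>\<^sup>+x. ennreal (exp (- lam * ln (x (i, y)))) * indicator {x. decoder N (\<lambda>t. x (i, t)) (pmf mu) = y} x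
           \<partial>Pi\<^sub>M ({i} \<times> {0..<N}) (\<lambda>_. uniform01)) = ennreal (q / (1 - lam * q))"
proof (cases "q = 0")
  case True
  have "AE x in Pi\<^sub>M ({i} \<times> {0..<N}) (\<lambda>_. uniform01).
      ennreal (exp (- lam * ln (x (i, y)))) * indicator {x. decoder N (\<lambda>t. x (i, t)) (pmf mu) = y} x = 0"
    using AE_decoder_neq_if_pmf_zero[OF supp True[unfolded q_def]] by eventually_elim simp
  then have "(\<integral>\<^sup>+x. ennreal (exp (- lam * ln (x (i, y)))) * indicator {x. decoder N (\<lambda>t. x (i, t)) (pmf mu) = y} x
      \<partial>Pi\<^sub>M ({i} \<times> {0..<N}) (\<lambda>_. uniform01)) = (\<integral>\<^sup>+x. 0 \<partial>Pi\<^sub>M ({i} \<times> {0..<N}) (\<lambda>_. uniform01))"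
    by (rule nn_integral_cong_AE)
  then show ?thesis
    using True by simp
next
  case False
  then have "0 < pmf mu y"
    using pmf_nonneg[of mu y] by (simp add: q_def)
  then show ?thesis
    unfolding q_def by (rule nn_integral_decoder_row_pos[OF supp _ lam])
qed

definition token_prob :: "(nat list \<Rightarrow> nat pmf) \<Rightarrow> nat list \<Rightarrow> nat \<Rightarrow> real" where
  "token_prob p y i = pmf (p (take i y)) (y ! i)"

lemma token_prob_nonneg: "0 \<le> token_prob p y i"
  and token_prob_le_1: "token_prob p y i \<le> 1"
  by (simp_all add: token_prob_def pmf_le_1)

lemma mult_token_prob_less_1: "0 \<le> lam \<Longrightarrow> lam < 1 \<Longrightarrow> lam * token_prob p y i < 1"
  using token_prob_le_1[of p y i] mult_left_le[of "token_prob p y i" lam] by simp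

lemma less_if_token_prob_pos:
  assumes "\<And>ys. set_pmf (p ys) \<subseteq> {0..<N}" and "0 < token_prob p y i"
  shows "y ! i < N"
proof -
  have "y ! i \<in> set_pmf (p (take i y))"
    using assms(2) by (simp add: token_prob_def set_pmf_iff)
  then show ?thesis
    using assms(1)[of "take i y"] by auto
qed

lemma sum_token_prob_eq: "(\<Sum>i<length y. token_prob p y i) = length y * (1 - alpha p y)"
  by (simp add: alpha_def token_prob_def)

lemma alpha_nonneg: "0 \<le> alpha p y"
  and alpha_le_1: "alpha p y \<le> 1"
proof -
  have "length y * (1 - alpha p y) \<le> length y * 1"
    using sum_mono[of "{..<length y}" "token_prob p y" "\<lambda>_. 1"] token_prob_le_1
    by (simp add: sum_token_prob_eq)
  moreover have "0 \<le> length y * (1 - alpha p y)"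
    using sum_nonneg[of "{..<length y}" "token_prob p y"] token_prob_nonneg
    by (simp add: sum_token_prob_eq)
  ultimately show "0 \<le> alpha p y" "alpha p y \<le> 1"
    by (cases "y = []"; simp add: alpha_def zero_le_mult_iff)+
qed

lemma prod_of_bool_eq:
  "finite A \<Longrightarrow> (\<Prod>x\<in>A. of_bool (P x)) = (of_bool (\<forall>x\<in>A. P x) :: 'a::comm_semiring_1)"
  by (induction A rule: finite_induct) auto

lemma nn_integral_exp_cost_generate:
  assumes supp: "\<And>ys. set_pmf (p ys) \<subseteq> {0..<N}" and len: "length y = m" and "m \<le> n"
    and lam: "0 \<le> lam" "lam < 1"
  shows "(\<integral>\<^sup>+x. ennreal (exp (lam * cost_d y x)) * indicator {x \<in> space (key_space N n). generate N p x m = y} x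
           \<partial>key_space N n)
       = ennreal (\<Prod>i<m. token_prob p y i / (1 - lam * token_prob p y i))"
proof -
  define G where "G i r = ennreal (exp (- lam * ln (r (y ! i)))) *
      indicator {r. decoder N r (pmf (p (take i y))) = y ! i} r" for i r
  have "ennreal (exp (lam * cost_d y x)) * indicator {x \<in> space (key_space N n). generate N p x m = y} x
      = (\<Prod>i<m. G i (\<lambda>t. x (i, t)))" if "x \<in> space (key_space N n)" for x
  proof -
    have "exp (lam * cost_d y x) = (\<Prod>i<m. exp (- lam * ln (x (i, y ! i))))"
      by (simp add: cost_d_def len exp_sum sum_distrib_left flip: sum_negf)
    then show ?thesis
      using that by (auto simp: G_def prod.distrib generate_eq_iff len indicator_def prod_of_bool_eq prod_ennreal)
  qed
  then have "(\<integral>\<^sup>+x. ennreal (exp (lam * cost_d y x)) * indicator {x \<in> space (key_space N n). generate N p x m = y} x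
        \<partial>key_space N n) = (\<integral>\<^sup>+x. (\<Prod>i<m. G i (\<lambda>t. x (i, t))) \<partial>key_space N n)"
    by (rule nn_integral_cong)
  also have "\<dots> = (\<Prod>i<m. \<integral>\<^sup>+x. G i (\<lambda>t. x (i, t)) \<partial>Pi\<^sub>M ({i} \<times> {0..<N}) (\<lambda>_. uniform01))"
    unfolding key_space_def
    by (rule nn_integral_PiM_prod_first_rows[OF prob_space_uniform01 _ \<open>m \<le> n\<close>]) (simp add: G_def; measurable)
  also have "\<dots> = (\<Prod>i<m. ennreal (token_prob p y i / (1 - lam * token_prob p y i)))"
    using nn_integral_decoder_row[OF supp lam] by (simp add: G_def token_prob_def indicator_def)
  also have "\<dots> = ennreal (\<Prod>i<m. token_prob p y i / (1 - lam * token_prob p y i))"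
    using mult_token_prob_less_1[OF lam] token_prob_nonneg by (intro prod_ennreal divide_nonneg_pos) auto
  finally show ?thesis .
qed

lemma prob_generate_eq:
  assumes supp: "\<And>ys. set_pmf (p ys) \<subseteq> {0..<N}" and "length y = m" "m \<le> n"
  shows "\<P>(x in key_space N n. generate N p x m = y) = (\<Prod>i<m. token_prob p y i)"
proof -
  have "{x \<in> space (key_space N n). generate N p x m = y} \<in> sets (key_space N n)"
    unfolding key_space_def by measurable
  then have "emeasure (key_space N n) {x \<in> space (key_space N n). generate N p x m = y}
      = ennreal (\<Prod>i<m. token_prob p y i)"
    using nn_integral_exp_cost_generate[of p, OF supp assms(2,3), of 0] by simp
  then show ?thesis
    by (simp add: measure_def token_prob_def prod_nonneg)
qed

lemma length_eq_if_prob_generate_pos: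
  assumes "0 < \<P>(xi in key_space N n. generate N p xi m = y)"
  shows "length y = m"
proof -
  obtain xi where "generate N p xi m = y"
    using assms by (metis (mono_tags, lifting) Collect_empty_eq less_irrefl measure_empty)
  then show ?thesis
    by (simp add: generate_eq_iff)
qed

section \<open>The test statistic and the independent key\<close>

definition key_shift :: "nat \<Rightarrow> nat \<Rightarrow> (nat \<times> nat \<Rightarrow> real) \<Rightarrow> nat \<times> nat \<Rightarrow> real" where
  "key_shift n j xi = (\<lambda>(l, t). xi ((j + l) mod n, t))"

lemma measurable_cost_d[measurable]:
  "cost_d y \<in> borel_measurable (Pi\<^sub>M J (\<lambda>_::nat \<times> nat. uniform01))"
  "(\<lambda>x. cost_d y (key_shift n j x)) \<in> borel_measurable (Pi\<^sub>M J (\<lambda>_::nat \<times> nat. uniform01))"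
  unfolding cost_d_def key_shift_def by simp_all measurable

lemma phi_eq_Min_key_shift:
  "length y \<le> n \<Longrightarrow> phi n (length y) y xi = Min ((\<lambda>j. cost_d y (key_shift n j xi)) ` {..<n})"
  unfolding phi_def key_shift_def by (rule arg_cong[where f = Min]) auto

lemma phi_le_cost_d:
  assumes "length y \<le> n" "0 < n"
  shows "phi n (length y) y xi \<le> cost_d y xi"
proof -
  have "cost_d y xi = cost_d y (key_shift n 0 xi)"
    using assms(1) by (simp add: cost_d_def key_shift_def)
  then show ?thesis
    using assms by (simp add: phi_eq_Min_key_shift)
qed

lemma phi_eq_cost_d_key_shift:
  assumes "length y \<le> n" "0 < n"
  obtains j where "j < n" "phi n (length y) y xi = cost_d y (key_shift n j xi)"
proof -
  have "phi n (length y) y xi \<in> (\<lambda>j. cost_d y (key_shift n j xi)) ` {..<n}"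
    unfolding phi_eq_Min_key_shift[OF assms(1)] using assms(2) by (intro Min_in) auto
  then show ?thesis
    using that by auto
qed

lemma nn_integral_exp_neg_cost_d_key_shift:
  assumes "length y \<le> n" "j < n" "\<forall>l<length y. y ! l < N" "0 \<le> lam"
  shows "(\<integral>\<^sup>+x. ennreal (exp (- lam * cost_d y (key_shift n j x))) \<partial>key_space N n)
       = ennreal (1 / (1 + lam)) ^ length y"
proof -
  define c where "c l = ((j + l) mod n, y ! l)" for l
  have "inj_on (\<lambda>l. (j + l) mod n) {..<length y}"
  proof (rule inj_onI)
    fix a b
    assume "a \<in> {..<length y}" "b \<in> {..<length y}" "(j + a) mod n = (j + b) mod n"
    moreover from this(3) have "a mod n = b mod n"
      by (simp add: nat_mod_eq_iff)
    ultimately show "a = b"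
      using assms(1) by simp
  qed
  then have inj: "inj_on c {..<length y}"
    by (auto simp: c_def inj_on_def)
  have range: "c ` {..<length y} \<subseteq> {0..<n} \<times> {0..<N}"
    using assms(2,3) by (auto simp: c_def)
  have meas: "(\<lambda>u. ennreal (exp (lam * ln u))) \<in> borel_measurable uniform01"
    by (simp add: measurable_cong_sets[OF sets_uniform01 refl])
  have "exp (- lam * cost_d y (key_shift n j x)) = (\<Prod>l<length y. exp (lam * ln (x (c l))))" for x
    by (simp add: cost_d_def key_shift_def c_def exp_sum sum_distrib_left sum_negf)
  then have "(\<integral>\<^sup>+x. ennreal (exp (- lam * cost_d y (key_shift n j x))) \<partial>key_space N n)
      = (\<integral>\<^sup>+x. (\<Prod>l<length y. ennreal (exp (lam * ln (x (c l))))) \<partial>Pi\<^sub>M ({0..<n} \<times> {0..<N}) (\<lambda>_. uniform01))"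
    unfolding key_space_def by (simp flip: prod_ennreal)
  also have "\<dots> = (\<integral>\<^sup>+u. ennreal (exp (lam * ln u)) \<partial>uniform01) ^ length y"
    by (rule nn_integral_PiM_prod_distinct_components[OF prob_space_uniform01 _ inj range meas]) simp
  also have "(\<integral>\<^sup>+u. ennreal (exp (lam * ln u)) \<partial>uniform01) = (\<integral>\<^sup>+u. ennreal (u powr lam) \<partial>uniform01)"
    using AE_uniform01 by (intro nn_integral_cong_AE) (auto elim!: eventually_mono simp: powr_def)
  also have "\<dots> = ennreal (1 / (1 + lam))"
    using nn_integral_uniform01_powr[of lam] assms(4) by (simp add: add.commute)
  finally show ?thesis .
qed

section \<open>Elementary inequalities\<close>

lemma exp_le_one_plus:
  fixes x :: real
  assumes "0 \<le> x" "x \<le> 1"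
  shows "exp (x - x\<^sup>2) \<le> 1 + x"
proof -
  have "exp (x - x\<^sup>2) \<le> exp (ln (1 + x))"
    using ln_one_plus_pos_lower_bound[OF assms] by simp
  then show ?thesis
    using assms by simp
qed

lemma exp_le_one_minus:
  fixes x :: real
  assumes "0 \<le> x" "x \<le> 1/4"
  shows "exp (- x - x\<^sup>2) \<le> 1 - x"
proof -
  define t where "t = x + x\<^sup>2"
  have "x\<^sup>2 \<le> x / 4" "x ^ 3 \<le> x / 4"
    using assms mult_left_mono[of x "1/4" x] mult_left_mono[of "x\<^sup>2" "1/4" x]
    by (auto simp: power2_eq_square power3_eq_cube)
  then have "0 \<le> x\<^sup>2 * (1 - x - x\<^sup>2 - x ^ 3) / 2"
    using assms by simp
  also have "\<dots> = (1 - x) * (1 + t + t\<^sup>2 / 2) - 1"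
    by (simp add: t_def power2_eq_square power3_eq_cube field_simps)
  also have "\<dots> \<le> (1 - x) * exp t - 1"
    using exp_lower_Taylor_quadratic[of t] assms by (auto simp: t_def intro!: mult_left_mono)
  finally have "exp (- t) * 1 \<le> exp (- t) * ((1 - x) * exp t)"
    by (intro mult_left_mono) auto
  also have "\<dots> = 1 - x"
    by (simp add: exp_minus field_simps)
  finally show ?thesis
    by (simp add: t_def)
qed

lemma chernoff_factor_le_exp:
  fixes lam x :: real
  assumes "0 \<le> x" "x \<le> lam" "lam \<le> 1/4"
  shows "1 / (1 + lam) * (1 / (1 - x)) \<le> exp (- lam + 2 * lam\<^sup>2 + x)"
proof -
  have "x\<^sup>2 \<le> lam\<^sup>2"
    using assms by (intro power_mono) auto
  then have "exp (- x - lam\<^sup>2) \<le> exp (- x - x\<^sup>2)"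
    by simp
  also have "\<dots> \<le> 1 - x"
    using exp_le_one_minus assms by simp
  finally have "exp (lam - lam\<^sup>2) * exp (- x - lam\<^sup>2) \<le> (1 + lam) * (1 - x)"
    using exp_le_one_plus[of lam] assms by (intro mult_mono) auto
  moreover have "0 < (1 + lam) * (1 - x)"
    using assms by (intro mult_pos_pos) auto
  ultimately have "1 / (1 + lam) * (1 / (1 - x)) \<le> 1 / (exp (lam - lam\<^sup>2) * exp (- x - lam\<^sup>2))"
    by (simp only: times_divide_times_eq mult_1) (intro divide_left_mono; auto)
  also have "\<dots> = exp (- lam + 2 * lam\<^sup>2 + x)"
    by (simp add: exp_minus[symmetric] divide_inverse flip: exp_add)
  finally show ?thesis .
qed

lemma prod_chernoff_factors_le_exp:
  fixes q :: "nat \<Rightarrow> real" and a :: real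
  assumes q: "\<And>i. i < m \<Longrightarrow> 0 \<le> q i \<and> q i \<le> 1" and a: "0 \<le> a" "a \<le> 1"
    and mean: "(\<Sum>i<m. q i) = m * (1 - a)"
  shows "(1 / (1 + a / 4)) ^ m * (\<Prod>i<m. 1 / (1 - a / 4 * q i)) \<le> exp (- (m * a\<^sup>2 / 8))"
proof -
  have "(1 / (1 + a / 4)) ^ m * (\<Prod>i<m. 1 / (1 - a / 4 * q i)) = (\<Prod>i<m. 1 / (1 + a / 4) * (1 / (1 - a / 4 * q i)))"
    by (simp only: prod.distrib prod_constant card_lessThan)
  also have "\<dots> \<le> (\<Prod>i<m. exp (- (a / 4) + 2 * (a / 4)\<^sup>2 + a / 4 * q i))"
  proof (intro prod_mono conjI)
    fix i assume "i \<in> {..<m}"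
    then have "0 \<le> a / 4 * q i" "a / 4 * q i \<le> a / 4"
      using q[of i] a by (auto intro: mult_left_le)
    then show "1 / (1 + a / 4) * (1 / (1 - a / 4 * q i)) \<le> exp (- (a / 4) + 2 * (a / 4)\<^sup>2 + a / 4 * q i)"
      "0 \<le> 1 / (1 + a / 4) * (1 / (1 - a / 4 * q i))"
      using chernoff_factor_le_exp[of "a / 4 * q i" "a / 4"] a by auto
  qed
  also have "\<dots> = exp (\<Sum>i<m. - (a / 4) + 2 * (a / 4)\<^sup>2 + a / 4 * q i)"
    by (simp add: exp_sum)
  also have "(\<Sum>i<m. - (a / 4) + 2 * (a / 4)\<^sup>2 + a / 4 * q i) = m * (- (a / 4) + 2 * (a / 4)\<^sup>2) + a / 4 * (\<Sum>i<m. q i)"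
    by (simp add: sum.distrib sum_distrib_left)
  also have "\<dots> = - (m * a\<^sup>2 / 8)"
    by (simp add: mean power2_eq_square field_simps)
  finally show ?thesis .
qed

lemma emeasure_phi_le_and_generate_le:
  assumes supp: "\<And>ys. set_pmf (p ys) \<subseteq> {0..<N}" and len: "length y = m" and "0 < n" "m \<le> n"
    and pos: "\<And>i. i < m \<Longrightarrow> 0 < token_prob p y i" and lam: "0 \<le> lam" "lam < 1"
  shows "emeasure (key_space N n \<Otimes>\<^sub>M key_space N n)
           {w \<in> space (key_space N n \<Otimes>\<^sub>M key_space N n).
             phi n m y (snd w) \<le> phi n m y (fst w) \<and> generate N p (fst w) m = y}
       \<le> of_nat n * ennreal (\<Prod>i<m. token_prob p y i / (1 - lam * token_prob p y i)) * ennreal (1 / (1 + lam)) ^ m"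
proof -
  let ?M = "key_space N n"
  define B where "B = {x \<in> space ?M. generate N p x m = y}"
  have [measurable]: "B \<in> sets ?M"
    unfolding B_def key_space_def by measurable
  have [measurable]: "cost_d y \<in> borel_measurable ?M" "(\<lambda>x. cost_d y (key_shift n j x)) \<in> borel_measurable ?M" for j
    unfolding key_space_def by simp_all
  have shift: "(\<integral>\<^sup>+z. ennreal (exp (- lam * cost_d y (key_shift n j z))) \<partial>?M) = ennreal (1 / (1 + lam)) ^ m"
    if "j < n" for j
    using nn_integral_exp_neg_cost_d_key_shift[of y n j N lam] less_if_token_prob_pos[OF supp pos]
      that len \<open>m \<le> n\<close> lam by simp
  have "emeasure (?M \<Otimes>\<^sub>M ?M) {w \<in> space (?M \<Otimes>\<^sub>M ?M).
            phi n m y (snd w) \<le> phi n m y (fst w) \<and> generate N p (fst w) m = y}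
      \<le> (\<Sum>j<n. (\<integral>\<^sup>+x. ennreal (exp (lam * cost_d y x)) * indicator B x \<partial>?M) *
                 (\<integral>\<^sup>+z. ennreal (exp (- lam * cost_d y (key_shift n j z))) \<partial>?M))"
  proof (rule emeasure_pair_le_sum_exponential_moments)
    show "sigma_finite_measure ?M"
      unfolding key_space_def by (intro prob_space_imp_sigma_finite prob_space_PiM prob_space_uniform01)
    fix w
    assume w: "w \<in> {w \<in> space (?M \<Otimes>\<^sub>M ?M). phi n m y (snd w) \<le> phi n m y (fst w) \<and> generate N p (fst w) m = y}"
    obtain j where "j < n" "phi n m y (snd w) = cost_d y (key_shift n j (snd w))"
      using phi_eq_cost_d_key_shift[of y n "snd w"] len \<open>0 < n\<close> \<open>m \<le> n\<close> by auto
    moreover have "phi n m y (fst w) \<le> cost_d y (fst w)"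
      using phi_le_cost_d[of y n "fst w"] len \<open>0 < n\<close> \<open>m \<le> n\<close> by auto
    ultimately show "fst w \<in> B \<and> (\<exists>j<n. cost_d y (key_shift n j (snd w)) \<le> cost_d y (fst w))"
      using w by (auto simp: B_def space_pair_measure)
  qed (use lam in simp_all)
  also have "\<dots> = (\<Sum>j<n. ennreal (\<Prod>i<m. token_prob p y i / (1 - lam * token_prob p y i)) * ennreal (1 / (1 + lam)) ^ m)"
    using shift nn_integral_exp_cost_generate[OF supp len \<open>m \<le> n\<close> lam]
    by (intro sum.cong refl) (simp add: B_def)
  also have "\<dots> = of_nat n * ennreal (\<Prod>i<m. token_prob p y i / (1 - lam * token_prob p y i)) * ennreal (1 / (1 + lam)) ^ m"
    by (simp add: mult.assoc)
  finally show ?thesis .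
qed

lemma cond_prob_phi_le_generate_le:
  assumes supp: "\<And>ys. set_pmf (p ys) \<subseteq> {0..<N}" and "1 \<le> m" "m \<le> n"
    and pos: "0 < \<P>(xi in key_space N n. generate N p xi m = y)" and lam: "0 \<le> lam" "lam < 1"
  shows "\<P>(w in key_space N n \<Otimes>\<^sub>M key_space N n.
            phi n m y (snd w) \<le> phi n m y (fst w) \<bar> generate N p (fst w) m = y)
       \<le> n * (1 / (1 + lam)) ^ m * (\<Prod>i<m. 1 / (1 - lam * token_prob p y i))"
proof -
  let ?M = "key_space N n"
  let ?q = "token_prob p y"
  have len: "length y = m"
    using pos by (rule length_eq_if_prob_generate_pos)
  have prob: "\<P>(xi in ?M. generate N p xi m = y) = (\<Prod>i<m. ?q i)"
    by (rule prob_generate_eq[OF supp len \<open>m \<le> n\<close>])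
  have q_pos: "0 < ?q i" if "i < m" for i
    using pos token_prob_nonneg[of p y i] prod_zero[of "{..<m}" ?q] that
    by (fastforce simp: prob order.order_iff_strict)
  have factors: "(\<Prod>i<m. ?q i / (1 - lam * ?q i)) = (\<Prod>i<m. ?q i) * (\<Prod>i<m. 1 / (1 - lam * ?q i))"
    by (simp add: prod.distrib[symmetric])
  have bound_nonneg: "0 \<le> (\<Prod>i<m. ?q i / (1 - lam * ?q i))"
    using mult_token_prob_less_1[OF lam] token_prob_nonneg by (intro prod_nonneg divide_nonneg_pos) auto
  have "emeasure (?M \<Otimes>\<^sub>M ?M) {w \<in> space (?M \<Otimes>\<^sub>M ?M).
          phi n m y (snd w) \<le> phi n m y (fst w) \<and> generate N p (fst w) m = y}
      \<le> ennreal (n * (\<Prod>i<m. ?q i / (1 - lam * ?q i)) * (1 / (1 + lam)) ^ m)"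
    using emeasure_phi_le_and_generate_le[OF supp len _ \<open>m \<le> n\<close> q_pos lam] \<open>1 \<le> m\<close> \<open>m \<le> n\<close> bound_nonneg lam
    by (simp add: ennreal_mult ennreal_power ennreal_of_nat_eq_real_of_nat)
  then have "\<P>(w in ?M \<Otimes>\<^sub>M ?M. phi n m y (snd w) \<le> phi n m y (fst w) \<and> generate N p (fst w) m = y)
      \<le> n * (\<Prod>i<m. ?q i / (1 - lam * ?q i)) * (1 / (1 + lam)) ^ m"
    unfolding measure_def using bound_nonneg lam by (intro enn2real_leI) auto
  then have "\<P>(w in ?M \<Otimes>\<^sub>M ?M. phi n m y (snd w) \<le> phi n m y (fst w) \<bar> generate N p (fst w) m = y)
      \<le> n * (\<Prod>i<m. ?q i / (1 - lam * ?q i)) * (1 / (1 + lam)) ^ m / (\<Prod>i<m. ?q i)"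
    unfolding cond_prob_def prob[symmetric] key_space_def using pos
    by (subst measure_pair_measure_fst) (simp_all add: prob_space_PiM prob_space_uniform01 divide_right_mono)
  also have "\<dots> = n * (1 / (1 + lam)) ^ m * (\<Prod>i<m. 1 / (1 - lam * ?q i))"
    using q_pos by (simp add: factors less_imp_neq[symmetric])
  finally show ?thesis .
qed

theorem lemma8:
  fixes N m n :: nat and p :: "nat list \<Rightarrow> nat pmf"
  assumes "\<And>ys. set_pmf (p ys) \<subseteq> {0..<N}"
    and "1 \<le> m" and "m \<le> n"
  shows "\<forall>y. \<P>(xi in key_space N n. generate N p xi m = y) > 0 \<longrightarrow>
     \<P>(w in key_space N n \<Otimes>\<^sub>M key_space N n.
          phi n m y (snd w) \<le> phi n m y (fst w) \<bar> generate N p (fst w) m = y)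
     \<le> 2 * real n * exp (- min (real m * (alpha p y)\<^sup>2 / 8) (real m * alpha p y / 4))"
proof (intro allI impI)
  fix y
  assume pos: "\<P>(xi in key_space N n. generate N p xi m = y) > 0"
  define a where "a = alpha p y"
  have a: "0 \<le> a" "a \<le> 1"
    by (simp_all add: a_def alpha_nonneg alpha_le_1)
  have len: "length y = m"
    using pos by (rule length_eq_if_prob_generate_pos)
  have "\<P>(w in key_space N n \<Otimes>\<^sub>M key_space N n.
          phi n m y (snd w) \<le> phi n m y (fst w) \<bar> generate N p (fst w) m = y)
      \<le> n * ((1 / (1 + a / 4)) ^ m * (\<Prod>i<m. 1 / (1 - a / 4 * token_prob p y i)))"
    using cond_prob_phi_le_generate_le[OF assms pos, of "a / 4"] a by (simp add: mult.assoc)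
  also have "\<dots> \<le> n * exp (- (m * a\<^sup>2 / 8))"
    using prod_chernoff_factors_le_exp[of m "token_prob p y" a] a token_prob_nonneg token_prob_le_1
      sum_token_prob_eq[of p y]
    by (intro mult_left_mono) (simp_all add: a_def len)
  also have "\<dots> \<le> 2 * n * exp (- min (m * a\<^sup>2 / 8) (m * a / 4))"
    by (intro mult_mono) simp_all
  finally show "\<P>(w in key_space N n \<Otimes>\<^sub>M key_space N n.
          phi n m y (snd w) \<le> phi n m y (fst w) \<bar> generate N p (fst w) m = y)
      \<le> 2 * real n * exp (- min (real m * (alpha p y)\<^sup>2 / 8) (real m * alpha p y / 4))"
    by (simp add: a_def)
qed

end
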